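(* Fix a type 1 generator $s=\begin{pmatrix} t+l_i & b\\0&1\end{pmatrix}$ with $1\le i\le d-1$, $b\in\mathbb{Z}_q$, and let $g=\begin{pmatrix}\prod_{k=1}^{d-1}(t+l_k)^{m_k} & R\\0&1\end{pmatrix}\in\Gamma_d(q)$. Decompose $$\prod_{k=1}^{d-1}(t+l_k)^{-m_k}R=R_1+R_2+\dots+R_d$$ and $$(t+l_i)^{-1}\prod_{k=1}^{d-1}(t+l_k)^{-m_k}\Big(b\prod_{k=1}^{d-1}(t+l_k)^{m_k}+R\Big)=b(t+l_i)^{-1}+(t+l_i)^{-1}(R_1+\dots+R_d)=Q_1+Q_2+\dots+Q_d$$ using the decomposition described in the context. Then: (1) if $n\ne i,d$, the minimal degree of $R_n$ is the same as the minimal degree of $Q_n$; (2) if $n=d$, the minimal degree of $Q_d$ is one greater than the minimal degree of $R_d$; (3) if $n=i$, the minimal degree of $Q_i$ is one less than the minimal degree of $R_i$.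
   Context: Standing assumptions: $q\ge2$, $d\ge3$, coefficients in $\mathbb{Z}_q$, and $l_1,\dots,l_{d-1}\in\mathbb{Z}_q$ distinct, each invertible, with all differences $l_i-l_j$ ($i\ne j$) invertible. $\mathcal{R}_d=\mathbb{Z}_q[t,(t+l_1)^{-1},\dots,(t+l_{d-1})^{-1}]$, and $\Gamma_d(q)$ is the group of matrices $\begin{pmatrix}\prod_{k=1}^{d-1}(t+l_k)^{m_k} & P\\0&1\end{pmatrix}$ with $m_k\in\mathbb{Z}$, $P\in\mathcal{R}_d$. Decomposition (known fact): every element of $\mathcal{R}_d$ can be written uniquely as $P_1+\dots+P_d$, where for $1\le n\le d-1$, $P_n$ is a polynomial in the variable $t+l_n$ all of whose terms have negative degree, and $P_d$ is a polynomial in the variable $t^{-1}$ all of whose terms have nonpositive degree. The minimal degree of $R_n,Q_n$ for $n\le d-1$ is taken as a polynomial in $t+l_n$, and for $n=d$ as a polynomial in $t^{-1}$. *)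

theory Defs
  imports "Berlekamp_Zassenhaus.Finite_Field" "HOL-Computational_Algebra.Polynomial"
begin

text \<open>Coefficients: the type 'q mod_ring (with 'q :: nontriv) is Z_q for q = CARD('q) >= 2.
  Elements of R_d = Z_q[t, (t+l_1)^-1, ..., (t+l_{d-1})^-1] are represented as formal
  fractions (N, D) of polynomials in t, with D a product of powers of the (t+l_k);
  two fractions denote the same element of the localisation iff N1*D2 = N2*D1
  (the t+l_k are monic, hence non-zero-divisors).\<close>

type_synonym 'a frac = "'a poly \<times> 'a poly"

definition lin :: "'a::comm_ring_1 \<Rightarrow> 'a poly" where
  "lin a = [:a, 1:]"

definition frac_eq :: "'a::comm_ring_1 frac \<Rightarrow> 'a frac \<Rightarrow> bool" where
  "frac_eq x y \<longleftrightarrow> fst x * snd y = fst y * snd x"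

definition fadd :: "'a::comm_ring_1 frac \<Rightarrow> 'a frac \<Rightarrow> 'a frac" where
  "fadd x y = (fst x * snd y + fst y * snd x, snd x * snd y)"

definition fmul :: "'a::comm_ring_1 frac \<Rightarrow> 'a frac \<Rightarrow> 'a frac" where
  "fmul x y = (fst x * fst y, snd x * snd y)"

definition fsum :: "'b set \<Rightarrow> ('b \<Rightarrow> 'a::comm_ring_1 frac) \<Rightarrow> 'a frac" where
  "fsum A f = ((\<Sum>n\<in>A. fst (f n) * (\<Prod>m\<in>A - {n}. snd (f m))), (\<Prod>n\<in>A. snd (f n)))"

definition fprod :: "'b set \<Rightarrow> ('b \<Rightarrow> 'a::comm_ring_1 frac) \<Rightarrow> 'a frac" where
  "fprod A f = ((\<Prod>n\<in>A. fst (f n)), (\<Prod>n\<in>A. snd (f n)))"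

definition fpoly :: "'a::comm_ring_1 poly \<Rightarrow> 'a frac" where
  "fpoly p = (p, 1)"

definition lpow :: "'a::comm_ring_1 \<Rightarrow> int \<Rightarrow> 'a frac" where
  "lpow a m = (if 0 \<le> m then (lin a ^ nat m, 1) else (1, lin a ^ nat (- m)))"

definition in_Rd :: "(nat \<Rightarrow> 'a::comm_ring_1) \<Rightarrow> nat \<Rightarrow> 'a frac \<Rightarrow> bool" where
  "in_Rd l d x \<longleftrightarrow> (\<exists>e::nat \<Rightarrow> nat. snd x = (\<Prod>k\<in>{1..d-1}. lin (l k) ^ e k))"

text \<open>A polynomial c in the variable u = (t+a)^-1 (with zero constant term, i.e. only
  negative powers of t+a) denotes the element sum_j coeff c j * (t+a)^(-j).\<close>
definition negpart :: "'a::comm_ring_1 \<Rightarrow> 'a poly \<Rightarrow> 'a frac" where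
  "negpart a c = ((\<Sum>j\<le>degree c. smult (coeff c j) (lin a ^ (degree c - j))), lin a ^ degree c)"

text \<open>The n-th summand of the decomposition: for n <= d-1 a polynomial in (t+l_n)^-1
  given by its coefficient polynomial c (coefficient of (t+l_n)^-j is coeff c j);
  for n = d a polynomial in t (= polynomial in t^-1 of nonpositive degree),
  the coefficient of t^j = (t^-1)^(-j) being coeff c j.\<close>
definition dpart :: "(nat \<Rightarrow> 'a::comm_ring_1) \<Rightarrow> nat \<Rightarrow> nat \<Rightarrow> 'a poly \<Rightarrow> 'a frac" where
  "dpart l d n c = (if n = d then fpoly c else negpart (l n) c)"

definition is_decomp :: "(nat \<Rightarrow> 'a::comm_ring_1) \<Rightarrow> nat \<Rightarrow> 'a frac \<Rightarrow> (nat \<Rightarrow> 'a poly) \<Rightarrow> bool" where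
  "is_decomp l d x P \<longleftrightarrow> (\<forall>n\<in>{1..d-1}. coeff (P n) 0 = 0) \<and>
     frac_eq x (fsum {1..d} (\<lambda>n. dpart l d n (P n)))"

text \<open>Minimal degree of the n-th summand: for n <= d-1 as a polynomial in t+l_n (the term
  coeff c j * (t+l_n)^-j has degree -j); for n = d as a polynomial in t^-1 (the term
  coeff c j * t^j has degree -j). In both cases it is the minimum of -j over the nonzero
  coefficients; the zero summand is given minimal degree 0 by convention.\<close>
definition min_deg :: "'a::zero poly \<Rightarrow> int" where
  "min_deg c = (if c = 0 then 0 else Min {- int j | j. coeff c j \<noteq> 0})"

definition invertible_el :: "'a::comm_ring_1 \<Rightarrow> bool" where
  "invertible_el x \<longleftrightarrow> (\<exists>u. x * u = 1)"

end

theory Submission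
  imports Defs
begin

text \<open>Let \<open>S\<^sub>R = R\<^sub>1 + \<dots> + R\<^sub>d\<close> and \<open>S\<^sub>Q = Q\<^sub>1 + \<dots> + Q\<^sub>d\<close>; the hypotheses say
  \<open>b + S\<^sub>R = (t + l\<^sub>i) S\<^sub>Q\<close>. For \<open>n < d\<close> the pole order of \<open>S\<^sub>R\<close> at \<open>t + l\<^sub>n\<close> is the
  degree of \<open>R\<^sub>n\<close> in \<open>(t + l\<^sub>n)\<^sup>-\<^sup>1\<close>, because the other summands are regular there and
  \<open>t + l\<^sub>n\<close> does not divide the numerator of \<open>R\<^sub>n\<close>. Multiplication by \<open>t + l\<^sub>i\<close>, a unit
  at every \<open>t + l\<^sub>n\<close> with \<open>n \<noteq> i\<close>, lowers the pole order at \<open>t + l\<^sub>i\<close> by one and keeps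
  the others. The polynomial parts satisfy \<open>(t + l\<^sub>i) Q\<^sub>d = R\<^sub>d + const\<close>, so the degree
  in \<open>t\<close> drops by one from \<open>R\<^sub>d\<close> to \<open>Q\<^sub>d\<close>.\<close>

lemma monic_nonzero: "monic p \<Longrightarrow> p \<noteq> (0::'a::comm_ring_1 poly)"
  by auto

lemma monic_mult_comm_ring:
  fixes p q :: "'a::comm_ring_1 poly"
  assumes "monic p" "monic q"
  shows "monic (p * q)"
  using degree_monic_mult[OF assms(1) monic_nonzero[OF assms(2)]] lcoeff_monic_mult[OF assms(1)] assms(2)
  by simp

lemma monic_power_comm_ring: "monic p \<Longrightarrow> monic (p ^ k :: 'a::comm_ring_1 poly)"
  by (induction k) (simp_all add: monic_mult_comm_ring)

lemma monic_prod_comm_ring: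
  "(\<And>x. x \<in> A \<Longrightarrow> monic (f x)) \<Longrightarrow> monic (prod f A :: 'a::comm_ring_1 poly)"
  by (induction A rule: infinite_finite_induct) (simp_all add: monic_mult_comm_ring)

lemma monic_mult_eq_0_iff: "monic p \<Longrightarrow> p * x = 0 \<longleftrightarrow> x = (0::'a::comm_ring_1 poly)"
  using lcoeff_monic_mult[of p x] by fastforce

lemma monic_mult_left_cancel: "monic p \<Longrightarrow> p * x = p * y \<longleftrightarrow> x = (y::'a::comm_ring_1 poly)"
  using monic_mult_eq_0_iff[of p "x - y"] by (auto simp: right_diff_distrib)

lemma monic_dvd_mult_cancel_left:
  fixes p x y :: "'a::comm_ring_1 poly"
  assumes "monic p" "p * x dvd p * y"
  shows "x dvd y"
proof -
  obtain k where "p * y = p * (x * k)" using assms(2) by (auto simp: mult.assoc elim: dvdE)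
  thus ?thesis using monic_mult_left_cancel[OF assms(1)] by auto
qed

lemma monic_lin: "monic (lin a)"
  by (simp add: lin_def)

lemma degree_lin [simp]: "degree (lin a) = 1"
  by (simp add: lin_def)

lemma monic_lin_power: "monic (lin a ^ k)"
  by (rule monic_power_comm_ring[OF monic_lin])

lemma degree_lin_power [simp]: "degree (lin a ^ k) = k"
proof (induction k)
  case (Suc k)
  show ?case
    using degree_monic_mult[OF monic_lin monic_nonzero[OF monic_lin_power], of a a k] Suc by simp
qed simp

lemma lin_dvd_const_iff: "lin a dvd [:c:] \<longleftrightarrow> c = (0::'a::comm_ring_1)"
proof
  assume "lin a dvd [:c:]"
  then obtain k where k: "[:c:] = lin a * k" by (auto elim: dvdE)
  have "k = 0"
  proof (rule ccontr)
    assume "k \<noteq> 0"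
    hence "degree (lin a * k) = 1 + degree k" by (simp add: degree_monic_mult[OF monic_lin])
    thus False using k by (metis degree_pCons_0 add_is_0 one_neq_zero)
  qed
  thus "c = 0" using k by simp
qed simp

definition bezout_coprime :: "'a::comm_ring_1 \<Rightarrow> 'a \<Rightarrow> bool" where
  "bezout_coprime x y \<longleftrightarrow> (\<exists>u v. u * x + v * y = 1)"

lemma bezout_coprime_commute: "bezout_coprime x y \<longleftrightarrow> bezout_coprime y x"
  unfolding bezout_coprime_def by (metis add.commute)

lemma bezout_coprime_1_left [simp]: "bezout_coprime 1 y"
  unfolding bezout_coprime_def by (rule exI[of _ 1], rule exI[of _ 0]) simp

lemma bezout_coprime_mult_left:
  assumes "bezout_coprime x z" "bezout_coprime y z"
  shows "bezout_coprime (x * y) z"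
proof -
  obtain u v u' v' where e: "u * x + v * z = 1" "u' * y + v' * z = 1"
    using assms by (auto simp: bezout_coprime_def)
  have "(u * u') * (x * y) + (u * x * v' + v * (u' * y) + v * v' * z) * z
      = (u * x + v * z) * (u' * y + v' * z)"
    by (simp add: algebra_simps)
  thus ?thesis using e unfolding bezout_coprime_def by auto
qed

lemma bezout_coprime_power_left: "bezout_coprime x z \<Longrightarrow> bezout_coprime (x ^ k) z"
  by (induction k) (simp_all add: bezout_coprime_mult_left)

lemma bezout_coprime_power_right: "bezout_coprime x z \<Longrightarrow> bezout_coprime x (z ^ k)"
  using bezout_coprime_power_left bezout_coprime_commute by metis

lemma bezout_coprime_prod_left:
  "(\<And>a. a \<in> A \<Longrightarrow> bezout_coprime (f a) z) \<Longrightarrow> bezout_coprime (prod f A) z"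
  by (induction A rule: infinite_finite_induct) (simp_all add: bezout_coprime_mult_left)

lemma bezout_coprime_dvd_mult_right:
  assumes "bezout_coprime x z" "z dvd x * y"
  shows "z dvd y"
proof -
  obtain u v k where e: "u * x + v * z = 1" "x * y = z * k"
    using assms by (auto simp: bezout_coprime_def elim!: dvdE)
  have "y = (u * x + v * z) * y" using e by simp
  also have "\<dots> = u * (x * y) + z * (v * y)" by (simp add: algebra_simps)
  also have "\<dots> = z * (u * k + v * y)" using e(2) by (simp add: algebra_simps)
  finally show ?thesis by (rule dvdI)
qed

lemma bezout_coprime_lin:
  assumes "invertible_el (a - c)"
  shows "bezout_coprime (lin a) (lin c)"
proof -
  obtain w where w: "(a - c) * w = 1" using assms by (auto simp: invertible_el_def)
  have "[:w:] * lin a + (- [:w:]) * lin c = [:(a - c) * w:]"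
    by (simp add: lin_def algebra_simps)
  thus ?thesis using w unfolding bezout_coprime_def by (metis one_pCons)
qed

lemma monic_power_dvd_diff_imp_dvd:
  fixes p U V :: "'a::comm_ring_1 poly"
  assumes p: "monic p" and dv: "p ^ (k + j) dvd p ^ k * U - p ^ (k + i) * V"
    and "0 < j" "0 < i"
  shows "p dvd U"
proof -
  have "p ^ k * p ^ j dvd p ^ k * (U - p ^ i * V)"
    using dv by (simp add: power_add algebra_simps)
  hence "p ^ j dvd U - p ^ i * V"
    by (rule monic_dvd_mult_cancel_left[OF monic_power_comm_ring[OF p]])
  hence "p dvd U - p ^ i * V"
    using \<open>0 < j\<close> dvd_trans dvd_power by blast
  moreover have "p dvd p ^ i * V" using \<open>0 < i\<close> by simp
  ultimately show ?thesis using dvd_add by fastforce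
qed

text \<open>The hypothesis says that \<open>X / p\<^sup>a\<close> and \<open>p\<^sup>e Y / p\<^sup>b\<close> differ by a
  \<open>p\<close>-integral element; as \<open>p\<close> divides neither numerator, their pole orders
  \<open>a\<close> and \<open>b - e\<close> agree.\<close>
lemma monic_power_dvd_diff_exponent_eq:
  fixes p X Y :: "'a::comm_ring_1 poly"
  assumes p: "monic p"
    and dv: "p ^ (a + b) dvd p ^ b * X - p ^ (a + e) * Y"
    and X: "0 < a \<Longrightarrow> \<not> p dvd X" and Y: "0 < b \<Longrightarrow> \<not> p dvd Y"
    and e: "e = 0 \<or> 0 < a"
  shows "b = a + e"
proof (rule linorder_cases)
  assume lt: "b < a + e"
  with e have "0 < a" by auto
  moreover have "p ^ (b + a) dvd p ^ b * X - p ^ (b + (a + e - b)) * Y"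
    using dv lt by (simp add: add.commute)
  ultimately have "p dvd X"
    using lt by (intro monic_power_dvd_diff_imp_dvd[OF p, of b a X "a + e - b" Y]) auto
  thus ?thesis using X \<open>0 < a\<close> by blast
next
  assume gt: "a + e < b"
  have "p ^ (a + b) dvd p ^ (a + e) * Y - p ^ b * X"
    using dv by (metis dvd_minus_iff minus_diff_eq)
  hence "p ^ ((a + e) + (b - e)) dvd p ^ (a + e) * Y - p ^ ((a + e) + (b - a - e)) * X"
    using gt by (simp add: algebra_simps)
  hence "p dvd Y"
    using gt by (intro monic_power_dvd_diff_imp_dvd[OF p, of "a + e" "b - e" Y "b - a - e" X]) auto
  thus ?thesis using Y gt by simp
qed

lemma sum_eq_0_or_degree_less:
  fixes f :: "'b \<Rightarrow> 'a::comm_ring_1 poly"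
  assumes "\<And>x. x \<in> S \<Longrightarrow> f x = 0 \<or> degree (f x) < k"
  shows "sum f S = 0 \<or> degree (sum f S) < k"
  using assms
proof (induction S rule: infinite_finite_induct)
  case (insert x F)
  hence "f x = 0 \<or> degree (f x) < k" "sum f F = 0 \<or> degree (sum f F) < k" by simp_all
  thus ?case
    using degree_add_le_max[of "f x" "sum f F"] insert.hyps by (auto simp: max_def split: if_splits)
qed auto

lemma fsum_remove:
  assumes "finite A" "n \<in> A"
  shows "fst (fsum A f) = fst (f n) * (\<Prod>m\<in>A - {n}. snd (f m))
      + snd (f n) * (\<Sum>k\<in>A - {n}. fst (f k) * (\<Prod>m\<in>A - {k} - {n}. snd (f m)))"
    and "snd (fsum A f) = snd (f n) * (\<Prod>m\<in>A - {n}. snd (f m))"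
proof -
  have "(\<Prod>m\<in>A - {k}. snd (f m)) = snd (f n) * (\<Prod>m\<in>A - {k} - {n}. snd (f m))"
    if "k \<in> A - {n}" for k
    using assms that by (subst prod.remove[of _ n]) auto
  hence "(\<Sum>k\<in>A - {n}. fst (f k) * (\<Prod>m\<in>A - {k}. snd (f m)))
      = snd (f n) * (\<Sum>k\<in>A - {n}. fst (f k) * (\<Prod>m\<in>A - {k} - {n}. snd (f m)))"
    by (simp add: sum_distrib_left algebra_simps)
  thus "fst (fsum A f) = fst (f n) * (\<Prod>m\<in>A - {n}. snd (f m))
      + snd (f n) * (\<Sum>k\<in>A - {n}. fst (f k) * (\<Prod>m\<in>A - {k} - {n}. snd (f m)))"
    unfolding fsum_def using assms by (simp add: sum.remove)
  show "snd (fsum A f) = snd (f n) * (\<Prod>m\<in>A - {n}. snd (f m))"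
    unfolding fsum_def using assms by (simp add: prod.remove)
qed

lemma min_deg_eq_neg_degree: "min_deg c = - int (degree c)"
proof (cases "c = 0")
  case False
  let ?S = "{- int j | j. coeff c j \<noteq> 0}"
  have "?S \<subseteq> (\<lambda>j. - int j) ` {..degree c}" using le_degree by fastforce
  hence "finite ?S" by (rule finite_subset) simp
  moreover have "- int (degree c) \<in> ?S" using False by auto
  moreover have "\<forall>x\<in>?S. - int (degree c) \<le> x" using le_degree by fastforce
  ultimately have "Min ?S = - int (degree c)" by (intro Min_eqI) auto
  thus ?thesis using False by (simp add: min_deg_def)
qed (simp add: min_deg_def)

lemma snd_negpart [simp]: "snd (negpart a c) = lin a ^ degree c"
  by (simp add: negpart_def)

text \<open>The numerator of \<open>negpart a c\<close> is \<open>c\<close> with reversed coefficients, written in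
  powers of \<open>t + a\<close>; reduced modulo \<open>t + a\<close> only the leading coefficient survives.\<close>
lemma negpart_numerator_mod_lin:
  "\<exists>Z. fst (negpart a c) = [:lead_coeff c:] + lin a * Z"
proof (cases "degree c")
  case 0
  thus ?thesis unfolding negpart_def by (intro exI[of _ 0]) (simp add: one_pCons)
next
  case (Suc k)
  have "fst (negpart a c)
      = lin a * (\<Sum>j\<le>k. smult (coeff c j) (lin a ^ (k - j))) + [:coeff c (Suc k):]"
    unfolding negpart_def using Suc
    by (simp add: sum_distrib_left Suc_diff_le mult_smult_right one_pCons)
  thus ?thesis using Suc by (metis add.commute)
qed

lemma lin_not_dvd_negpart_numerator:
  assumes "0 < degree c"
  shows "\<not> lin a dvd fst (negpart a c)"
proof
  assume "lin a dvd fst (negpart a c)"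
  moreover obtain Z where "fst (negpart a c) = [:lead_coeff c:] + lin a * Z"
    using negpart_numerator_mod_lin by blast
  ultimately have "lin a dvd [:lead_coeff c:]"
    by (metis dvd_add_left_iff dvd_triv_left)
  hence "c = 0" by (simp add: lin_dvd_const_iff)
  thus False using assms by simp
qed

lemma negpart_numerator_eq_0_or_degree_less:
  assumes "coeff c 0 = 0"
  shows "fst (negpart a c) = 0 \<or> degree (fst (negpart a c)) < degree c"
proof (cases "degree c")
  case 0
  thus ?thesis using assms unfolding negpart_def by simp
next
  case (Suc k)
  have "fst (negpart a c) = (\<Sum>j\<in>{1..Suc k}. smult (coeff c j) (lin a ^ (Suc k - j)))"
    unfolding negpart_def using Suc assms by (simp add: atMost_atLeast0 sum.atLeast_Suc_atMost)
  also have "degree \<dots> \<le> k"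
  proof (rule degree_sum_le)
    fix j assume "j \<in> {1..Suc k}"
    thus "degree (smult (coeff c j) (lin a ^ (Suc k - j))) \<le> k"
      using degree_smult_le[of "coeff c j" "lin a ^ (Suc k - j)"] by auto
  qed simp
  finally show ?thesis using Suc by simp
qed

definition decomp_sum :: "(nat \<Rightarrow> 'a::comm_ring_1) \<Rightarrow> nat \<Rightarrow> (nat \<Rightarrow> 'a poly) \<Rightarrow> 'a frac" where
  "decomp_sum l d P = fsum {1..d} (\<lambda>n. dpart l d n (P n))"

lemma dpart_last [simp]: "dpart l d d c = (c, 1)"
  by (simp add: dpart_def fpoly_def)

lemma dpart_less [simp]: "n \<noteq> d \<Longrightarrow> dpart l d n c = negpart (l n) c"
  by (simp add: dpart_def)

lemma monic_snd_dpart: "monic (snd (dpart l d n c))"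
  using monic_lin_power[of "l n" "degree c"] by (cases "n = d") simp_all

lemma monic_snd_decomp_sum: "monic (snd (decomp_sum l d P))"
  unfolding decomp_sum_def fsum_def snd_conv by (rule monic_prod_comm_ring, rule monic_snd_dpart)

lemma bezout_coprime_decomp_cofactor:
  assumes l_diff: "\<forall>j\<in>{1..d-1}. \<forall>k\<in>{1..d-1}. j \<noteq> k \<longrightarrow> invertible_el (l j - l k)"
    and n: "n \<in> {1..d-1}"
  shows "bezout_coprime (\<Prod>m\<in>{1..d} - {n}. snd (dpart l d m (P m))) (lin (l n))"
proof (rule bezout_coprime_prod_left)
  fix m assume m: "m \<in> {1..d} - {n}"
  show "bezout_coprime (snd (dpart l d m (P m))) (lin (l n))"
  proof (cases "m = d")
    case False
    with m n l_diff have "bezout_coprime (lin (l m)) (lin (l n))"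
      by (intro bezout_coprime_lin) auto
    thus ?thesis using False by (simp add: bezout_coprime_power_left)
  qed simp
qed

text \<open>Comparing the principal parts at \<open>t + l\<^sub>n\<close> of \<open>B + S\<^sub>P = C S\<^sub>Q\<close>: all other
  summands and denominators are units at \<open>t + l\<^sub>n\<close>.\<close>
lemma decomp_sum_local_relation:
  fixes P Q :: "nat \<Rightarrow> 'a::comm_ring_1 poly" and B C :: "'a poly"
  assumes l_diff: "\<forall>j\<in>{1..d-1}. \<forall>k\<in>{1..d-1}. j \<noteq> k \<longrightarrow> invertible_el (l j - l k)"
    and n: "n \<in> {1..d-1}"
    and rel: "B * snd (decomp_sum l d Q) * snd (decomp_sum l d P) + fst (decomp_sum l d P) * snd (decomp_sum l d Q)
      = C * fst (decomp_sum l d Q) * snd (decomp_sum l d P)"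
  shows "lin (l n) ^ (degree (P n) + degree (Q n)) dvd
    lin (l n) ^ degree (Q n) * fst (negpart (l n) (P n))
      - lin (l n) ^ degree (P n) * (C * fst (negpart (l n) (Q n)))"
proof -
  define L where "L = lin (l n)"
  define a where "a = degree (P n)"
  define c where "c = degree (Q n)"
  define NP where "NP = fst (negpart (l n) (P n))"
  define NQ where "NQ = fst (negpart (l n) (Q n))"
  define WP where "WP = (\<Prod>m\<in>{1..d} - {n}. snd (dpart l d m (P m)))"
  define WQ where "WQ = (\<Prod>m\<in>{1..d} - {n}. snd (dpart l d m (Q m)))"
  have nI: "n \<in> {1..d}" "n \<noteq> d" using n by auto
  obtain YP where P: "fst (decomp_sum l d P) = NP * WP + L ^ a * YP"
    and dP: "snd (decomp_sum l d P) = L ^ a * WP"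
    using fsum_remove[OF _ nI(1), of "\<lambda>m. dpart l d m (P m)"] nI(2)
    unfolding decomp_sum_def NP_def WP_def L_def a_def by auto
  obtain YQ where Q: "fst (decomp_sum l d Q) = NQ * WQ + L ^ c * YQ"
    and dQ: "snd (decomp_sum l d Q) = L ^ c * WQ"
    using fsum_remove[OF _ nI(1), of "\<lambda>m. dpart l d m (Q m)"] nI(2)
    unfolding decomp_sum_def NQ_def WQ_def L_def c_def by auto
  have "(WP * WQ) * (L ^ c * NP - L ^ a * (C * NQ))
      - (L ^ a * L ^ c) * (C * YQ * WP - B * WQ * WP - YP * WQ)
      = (B * (L ^ c * WQ) * (L ^ a * WP) + (NP * WP + L ^ a * YP) * (L ^ c * WQ))
        - C * (NQ * WQ + L ^ c * YQ) * (L ^ a * WP)"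
    by (simp add: algebra_simps)
  hence "(WP * WQ) * (L ^ c * NP - L ^ a * (C * NQ))
      = L ^ (a + c) * (C * YQ * WP - B * WQ * WP - YP * WQ)"
    using rel unfolding P Q dP dQ by (simp add: power_add)
  hence "L ^ (a + c) dvd (WP * WQ) * (L ^ c * NP - L ^ a * (C * NQ))"
    by (metis dvd_triv_left)
  moreover have "bezout_coprime (WP * WQ) (L ^ (a + c))"
    unfolding WP_def WQ_def L_def
    by (intro bezout_coprime_power_right bezout_coprime_mult_left
        bezout_coprime_decomp_cofactor[OF l_diff n])
  ultimately show ?thesis
    unfolding L_def a_def c_def NP_def NQ_def by (rule bezout_coprime_dvd_mult_right[rotated])
qed

lemma decomp_sum_polynomial_part:
  fixes P :: "nat \<Rightarrow> 'a::comm_ring_1 poly"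
  assumes c0: "\<forall>n\<in>{1..d-1}. coeff (P n) 0 = 0" and d: "1 \<le> d"
  obtains T where "fst (decomp_sum l d P) = P d * snd (decomp_sum l d P) + T"
    and "T = 0 \<or> degree T < degree (snd (decomp_sum l d P))"
proof -
  let ?f = "\<lambda>n. dpart l d n (P n)"
  let ?I = "{1..d} - {d}"
  define W where "W = (\<Prod>m\<in>?I. snd (?f m))"
  define T where "T = (\<Sum>k\<in>?I. fst (?f k) * (\<Prod>m\<in>{1..d} - {k} - {d}. snd (?f m)))"
  have dI: "d \<in> {1..d}" using d by simp
  have "fst (decomp_sum l d P) = P d * snd (decomp_sum l d P) + T"
    using fsum_remove[OF _ dI, of ?f] unfolding decomp_sum_def T_def by simp
  moreover have "T = 0 \<or> degree T < degree (snd (decomp_sum l d P))"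
    unfolding T_def
  proof (rule sum_eq_0_or_degree_less)
    fix k assume k: "k \<in> ?I"
    define V where "V = (\<Prod>m\<in>{1..d} - {k} - {d}. snd (?f m))"
    have "monic V" unfolding V_def by (rule monic_prod_comm_ring, rule monic_snd_dpart)
    have "snd (decomp_sum l d P) = lin (l k) ^ degree (P k) * V"
      using fsum_remove(2)[OF _ dI, of ?f] k
      unfolding decomp_sum_def V_def
      by (simp add: prod.remove[of _ k] Diff_insert2[symmetric] insert_commute)
    hence deg: "degree (snd (decomp_sum l d P)) = degree (P k) + degree V"
      using degree_monic_mult[OF monic_lin_power monic_nonzero[OF \<open>monic V\<close>]] by simp
    have "fst (?f k) = 0 \<or> degree (fst (?f k)) < degree (P k)"
      using negpart_numerator_eq_0_or_degree_less[of "P k" "l k"] c0 k by auto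
    thus "fst (?f k) * V = 0 \<or> degree (fst (?f k) * V) < degree (snd (decomp_sum l d P))"
      unfolding deg using degree_mult_le[of "fst (?f k)" V] by auto
  qed
  ultimately show ?thesis by (rule that)
qed

lemma lpow_uminus: "lpow a (- m) = (snd (lpow a m), fst (lpow a m))"
  by (simp add: lpow_def)

lemma monic_lpow: "monic (fst (lpow a m))" "monic (snd (lpow a m))"
  unfolding lpow_def using monic_lin_power[of a] by auto

text \<open>\<open>p + S\<^sub>R = (t + a) S\<^sub>Q\<close>, cleared of denominators.\<close>
lemma shift_identity:
  fixes R SR SQ :: "'a::comm_ring_1 frac" and p :: "'a poly"
  assumes "monic (snd R)"
    and R: "frac_eq (fmul (fprod K (\<lambda>k. lpow (l k) (- m k))) R) SR"
    and Q: "frac_eq (fmul (lpow a (-1)) (fmul (fprod K (\<lambda>k. lpow (l k) (- m k)))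
        (fadd (fmul (fpoly p) (fprod K (\<lambda>k. lpow (l k) (m k)))) R))) SQ"
  shows "p * snd SQ * snd SR + fst SR * snd SQ = lin a * fst SQ * snd SR"
proof -
  define A where "A = (\<Prod>k\<in>K. snd (lpow (l k) (m k)))"
  define B where "B = (\<Prod>k\<in>K. fst (lpow (l k) (m k)))"
  have inv: "fprod K (\<lambda>k. lpow (l k) (- m k)) = (A, B)"
    by (simp add: fprod_def A_def B_def lpow_uminus)
  have pos: "fprod K (\<lambda>k. lpow (l k) (m k)) = (B, A)"
    by (simp add: fprod_def A_def B_def)
  have "monic (A * B * snd R)"
    unfolding A_def B_def using assms(1)
    by (intro monic_mult_comm_ring monic_prod_comm_ring monic_lpow)
  moreover have "A * fst R * snd SR = fst SR * (B * snd R)"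
    using R by (simp add: inv frac_eq_def fmul_def)
  moreover have "A * (p * B * snd R + fst R * A) * snd SQ = fst SQ * (lin a * (B * (A * snd R)))"
  proof -
    have "lpow a (-1) = (1, lin a)" by (simp add: lpow_def)
    thus ?thesis using Q by (simp add: inv pos frac_eq_def fmul_def fadd_def fpoly_def algebra_simps)
  qed
  moreover have "(A * B * snd R) * (p * snd SQ * snd SR + fst SR * snd SQ)
      - (A * B * snd R) * (lin a * fst SQ * snd SR)
      = A * snd SQ * (fst SR * (B * snd R) - A * fst R * snd SR)
        + snd SR * (A * (p * B * snd R + fst R * A) * snd SQ - fst SQ * (lin a * (B * (A * snd R))))"
    by (simp add: algebra_simps)
  ultimately show ?thesis by (simp add: monic_mult_left_cancel)
qed

text \<open>Read \<open>N/D = P + T/D\<close> as polynomial plus proper part; then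
  \<open>B + N\<^sub>P/D\<^sub>P = (t + a) N\<^sub>Q/D\<^sub>Q\<close> forces \<open>(t + a) Q - P - B\<close> to be a constant.\<close>
lemma lin_mult_polynomial_part:
  fixes NP DP NQ DQ P Q TP TQ B :: "'a::comm_ring_1 poly"
  assumes DP: "monic DP" and DQ: "monic DQ"
    and P: "NP = P * DP + TP" "TP = 0 \<or> degree TP < degree DP"
    and Q: "NQ = Q * DQ + TQ" "TQ = 0 \<or> degree TQ < degree DQ"
    and rel: "B * DQ * DP + NP * DQ = lin a * NQ * DP"
  shows "degree (lin a * Q - P - B) = 0"
proof (rule ccontr)
  define \<Delta> where "\<Delta> = lin a * Q - P - B"
  assume "degree (lin a * Q - P - B) \<noteq> 0"
  hence "degree \<Delta> \<noteq> 0" "\<Delta> \<noteq> 0" by (auto simp: \<Delta>_def)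
  have "\<Delta> * (DQ * DP) - (TP * DQ - lin a * TQ * DP) = lin a * NQ * DP - (B * DQ * DP + NP * DQ)"
    unfolding \<Delta>_def P Q by (simp add: algebra_simps)
  hence eq: "\<Delta> * (DQ * DP) = TP * DQ - lin a * TQ * DP" using rel by simp
  have "degree (TP * DQ) \<le> degree DQ + degree DP"
    using P(2) degree_mult_le[of TP DQ] by auto
  moreover have "degree (lin a * TQ * DP) \<le> degree DQ + degree DP"
    using Q(2) degree_mult_le[of "lin a * TQ" DP] degree_mult_le[of "lin a" TQ] by auto
  ultimately have "degree (\<Delta> * (DQ * DP)) \<le> degree DQ + degree DP"
    unfolding eq by (rule degree_diff_le)
  moreover have "degree ((DQ * DP) * \<Delta>) = degree DQ + degree DP + degree \<Delta>"
    using degree_monic_mult[OF monic_mult_comm_ring[OF DQ DP] \<open>\<Delta> \<noteq> 0\<close>]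
      degree_monic_mult[OF DQ monic_nonzero[OF DP]] by simp
  ultimately show False using \<open>degree \<Delta> \<noteq> 0\<close> by (simp add: mult.commute)
qed

lemma degree_eq_if_lin_mult_diff_const:
  assumes "degree (lin a * q - r - [:c:]) = 0" and r: "1 \<le> degree r"
  shows "degree q + 1 = degree r"
proof -
  obtain k where "lin a * q - r - [:c:] = [:k:]"
    using assms(1) by (metis degree_0_id)
  hence "lin a * q = r + [:c + k:]" by (simp add: algebra_simps)
  hence "degree (lin a * q) = degree r" using r by (simp add: degree_add_eq_left)
  moreover have "q \<noteq> 0" using calculation r by auto
  ultimately show ?thesis using degree_monic_mult[OF monic_lin \<open>q \<noteq> 0\<close>, of a] by simp
qed

lemma is_decomp_iff:
  "is_decomp l d x P \<longleftrightarrow> (\<forall>n\<in>{1..d-1}. coeff (P n) 0 = 0) \<and> frac_eq x (decomp_sum l d P)"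
  by (simp add: is_decomp_def decomp_sum_def)

lemma decomp_degree_eq_off_shift:
  fixes P Q :: "nat \<Rightarrow> 'a::comm_ring_1 poly" and B :: "'a poly"
  assumes l_diff: "\<forall>j\<in>{1..d-1}. \<forall>k\<in>{1..d-1}. j \<noteq> k \<longrightarrow> invertible_el (l j - l k)"
    and n: "n \<in> {1..d-1}" and i: "i \<in> {1..d-1}" and "n \<noteq> i"
    and rel: "B * snd (decomp_sum l d Q) * snd (decomp_sum l d P) + fst (decomp_sum l d P) * snd (decomp_sum l d Q)
      = lin (l i) * fst (decomp_sum l d Q) * snd (decomp_sum l d P)"
  shows "degree (Q n) = degree (P n)"
proof -
  have "bezout_coprime (lin (l i)) (lin (l n))"
    using l_diff n i \<open>n \<noteq> i\<close> by (intro bezout_coprime_lin) auto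
  hence Y: "0 < degree (Q n) \<Longrightarrow> \<not> lin (l n) dvd lin (l i) * fst (negpart (l n) (Q n))"
    using lin_not_dvd_negpart_numerator bezout_coprime_dvd_mult_right by blast
  have "lin (l n) ^ (degree (P n) + degree (Q n)) dvd
      lin (l n) ^ degree (Q n) * fst (negpart (l n) (P n))
        - lin (l n) ^ (degree (P n) + 0) * (lin (l i) * fst (negpart (l n) (Q n)))"
    using decomp_sum_local_relation[OF l_diff n rel] by simp
  from monic_power_dvd_diff_exponent_eq[OF monic_lin this lin_not_dvd_negpart_numerator Y]
  show ?thesis by simp
qed

lemma decomp_degree_at_shift:
  fixes P Q :: "nat \<Rightarrow> 'a::comm_ring_1 poly" and B :: "'a poly"
  assumes l_diff: "\<forall>j\<in>{1..d-1}. \<forall>k\<in>{1..d-1}. j \<noteq> k \<longrightarrow> invertible_el (l j - l k)"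
    and i: "i \<in> {1..d-1}" and "coeff (P i) 0 = 0" and "P i \<noteq> 0"
    and rel: "B * snd (decomp_sum l d Q) * snd (decomp_sum l d P) + fst (decomp_sum l d P) * snd (decomp_sum l d Q)
      = lin (l i) * fst (decomp_sum l d Q) * snd (decomp_sum l d P)"
  shows "degree (Q i) = degree (P i) + 1"
proof -
  have a: "0 < degree (P i)"
    using assms(3,4) by (metis degree_0_id gr0I pCons_0_0)
  have "lin (l i) ^ (degree (P i) + degree (Q i)) dvd
      lin (l i) ^ degree (Q i) * fst (negpart (l i) (P i))
        - lin (l i) ^ (degree (P i) + 1) * fst (negpart (l i) (Q i))"
    using decomp_sum_local_relation[OF l_diff i rel] by (simp add: power_add mult.left_commute mult.assoc)
  from monic_power_dvd_diff_exponent_eq[OF monic_lin this lin_not_dvd_negpart_numerator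
      lin_not_dvd_negpart_numerator]
  show ?thesis using a by simp
qed

lemma decomp_degree_polynomial_part:
  fixes P Q :: "nat \<Rightarrow> 'a::comm_ring_1 poly"
  assumes "\<forall>n\<in>{1..d-1}. coeff (P n) 0 = 0" "\<forall>n\<in>{1..d-1}. coeff (Q n) 0 = 0" "1 \<le> d"
    and rel: "[:b:] * snd (decomp_sum l d Q) * snd (decomp_sum l d P) + fst (decomp_sum l d P) * snd (decomp_sum l d Q)
      = lin a * fst (decomp_sum l d Q) * snd (decomp_sum l d P)"
    and "1 \<le> degree (P d)"
  shows "degree (Q d) + 1 = degree (P d)"
proof -
  obtain TP TQ where
    "fst (decomp_sum l d P) = P d * snd (decomp_sum l d P) + TP"
    "TP = 0 \<or> degree TP < degree (snd (decomp_sum l d P))"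
    "fst (decomp_sum l d Q) = Q d * snd (decomp_sum l d Q) + TQ"
    "TQ = 0 \<or> degree TQ < degree (snd (decomp_sum l d Q))"
    using decomp_sum_polynomial_part assms(1-3) by metis
  hence "degree (lin a * Q d - P d - [:b:]) = 0"
    using lin_mult_polynomial_part[OF monic_snd_decomp_sum monic_snd_decomp_sum _ _ _ _ rel] by blast
  thus ?thesis using degree_eq_if_lin_mult_diff_const \<open>1 \<le> degree (P d)\<close> by blast
qed

theorem lemma6p1:
  fixes l :: "nat \<Rightarrow> 'q::nontriv mod_ring"
    and d i :: nat and b :: "'q mod_ring"
    and m :: "nat \<Rightarrow> int" and R :: "'q mod_ring frac"
    and Rp Qp :: "nat \<Rightarrow> 'q mod_ring poly"
  assumes d3: "d \<ge> 3"
    and l_unit: "\<forall>k\<in>{1..d-1}. invertible_el (l k)"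
    and l_inj: "inj_on l {1..d-1}"
    and l_diff: "\<forall>j\<in>{1..d-1}. \<forall>k\<in>{1..d-1}. j \<noteq> k \<longrightarrow> invertible_el (l j - l k)"
    and i: "i \<in> {1..d-1}"
    and R: "in_Rd l d R"
    and decR: "is_decomp l d (fmul (fprod {1..d-1} (\<lambda>k. lpow (l k) (- m k))) R) Rp"
    and decQ: "is_decomp l d
        (fmul (lpow (l i) (-1)) (fmul (fprod {1..d-1} (\<lambda>k. lpow (l k) (- m k)))
           (fadd (fmul (fpoly [:b:]) (fprod {1..d-1} (\<lambda>k. lpow (l k) (m k)))) R))) Qp"
  shows "(\<forall>n\<in>{1..d-1}. n \<noteq> i \<longrightarrow> min_deg (Qp n) = min_deg (Rp n))
       \<and> (degree (Rp d) \<ge> 1 \<longrightarrow> min_deg (Qp d) = min_deg (Rp d) + 1)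
       \<and> (Rp i \<noteq> 0 \<longrightarrow> min_deg (Qp i) = min_deg (Rp i) - 1)"
proof -
  have "monic (snd R)"
    using R monic_prod_comm_ring[OF monic_lin_power] unfolding in_Rd_def by metis
  hence rel: "[:b:] * snd (decomp_sum l d Qp) * snd (decomp_sum l d Rp) + fst (decomp_sum l d Rp) * snd (decomp_sum l d Qp)
      = lin (l i) * fst (decomp_sum l d Qp) * snd (decomp_sum l d Rp)"
    using decR decQ by (intro shift_identity) (auto simp: is_decomp_iff)
  have c0: "\<forall>n\<in>{1..d-1}. coeff (Rp n) 0 = 0" "\<forall>n\<in>{1..d-1}. coeff (Qp n) 0 = 0"
    using decR decQ by (simp_all add: is_decomp_iff)
  show ?thesis
    unfolding min_deg_eq_neg_degree
    using decomp_degree_eq_off_shift[OF l_diff _ i _ rel]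
      decomp_degree_polynomial_part[OF c0 _ rel] decomp_degree_at_shift[OF l_diff i _ _ rel] c0 i d3
    by force
qed

end
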